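(* Let $k\ge3$. Let $C$ be a cycle of length $2k$ and $P$ a path of length $2k$ such that $E(C)\cap E(P)=\emptyset$ and $V(C)\cap V(P)\ne\emptyset$. If $H:=C\cup P$ has girth at least $2k-2$, then $H$ can be decomposed into two paths whose lengths lie in $\{2k-1,2k,2k+1\}$.
   Context: Graphs are finite and simple; length = number of edges; girth = length of a shortest cycle. A decomposition of a graph is a set of subgraphs whose edge sets partition its edge set. *)

theory Defs
  imports Main "HOL-Library.Extended_Nat"
begin

text \<open>Graphs are given by their edge sets: an edge is a 2-element vertex set.
A cycle is given by its cyclic list of at least 3 distinct vertices; its length is the
number of vertices (= number of edges).\<close>

definition path_edges :: "'a list \<Rightarrow> 'a set set" where
  "path_edges xs = {{xs ! i, xs ! Suc i} | i. Suc i < length xs}"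

definition is_path :: "'a list \<Rightarrow> bool" where
  "is_path xs \<longleftrightarrow> xs \<noteq> [] \<and> distinct xs"

definition path_length :: "'a list \<Rightarrow> nat" where
  "path_length xs = length xs - 1"

definition cycle_edges :: "'a list \<Rightarrow> 'a set set" where
  "cycle_edges xs = path_edges xs \<union> {{last xs, hd xs}}"

definition is_cycle :: "'a list \<Rightarrow> bool" where
  "is_cycle xs \<longleftrightarrow> length xs \<ge> 3 \<and> distinct xs"

definition cycle_length :: "'a list \<Rightarrow> nat" where
  "cycle_length xs = length xs"

text \<open>Girth of the graph with edge set E: length of a shortest cycle (infinity if acyclic).\<close>
definition girth :: "'a set set \<Rightarrow> enat" where
  "girth E = Inf {enat (cycle_length cs) | cs. is_cycle cs \<and> cycle_edges cs \<subseteq> E}"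

definition decomposes_into_two_paths :: "'a set set \<Rightarrow> 'a list \<Rightarrow> 'a list \<Rightarrow> bool" where
  "decomposes_into_two_paths E p1 p2 \<longleftrightarrow>
     is_path p1 \<and> is_path p2 \<and> path_edges p1 \<union> path_edges p2 = E \<and>
     path_edges p1 \<inter> path_edges p2 = {}"

end

theory Submission
  imports Defs
begin

text \<open>
  Let \<open>P ! i\<close> be the first vertex of \<open>P\<close> on \<open>C\<close>; reversing \<open>P\<close> we may assume \<open>i \<le> k\<close>, and
  rotating \<open>C\<close> that \<open>P ! i = C ! 0\<close>. If the later vertices of \<open>P\<close> on \<open>C\<close> all avoid one of the
  two arcs of length \<open>max 2 i - 1\<close> next to \<open>C ! 0\<close>, then the first \<open>i\<close> edges of \<open>P\<close> followed by
  a suitable arc of \<open>C\<close>, and the rest of \<open>C\<close> followed by the rest of \<open>P\<close>, form the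
  decomposition. Otherwise \<open>P\<close> returns to this window around \<open>C ! 0\<close> at least twice. Closing
  the segments of \<open>P\<close> between \<open>P ! i\<close> and these returns by arcs of \<open>C\<close> inside the window gives
  cycles, so by the girth bound the segments are long, and they fit into \<open>P\<close> only for \<open>k = 3\<close>.
  The few configurations left for \<open>k = 3\<close> are decomposed by letting one path run once around \<open>C\<close>.
\<close>

section \<open>Edges of paths and cycles\<close>

definition path_edge :: "'a list \<Rightarrow> nat \<Rightarrow> 'a set" where
  "path_edge xs j = {xs ! j, xs ! Suc j}"

lemma path_edges_eq_image: "path_edges xs = path_edge xs ` {..<length xs - 1}"
  unfolding path_edges_def path_edge_def by (auto simp: image_def)

lemma path_edges_Nil [simp]: "path_edges [] = {}"
  by (simp add: path_edges_eq_image)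

lemma path_edges_singleton [simp]: "path_edges [x] = {}"
  by (simp add: path_edges_eq_image)

lemma path_edges_Cons_Cons: "path_edges (x # y # xs) = insert {x, y} (path_edges (y # xs))"
  by (simp add: path_edges_eq_image lessThan_Suc_eq_insert_0 image_image path_edge_def)

lemma path_edges_Cons: "xs \<noteq> [] \<Longrightarrow> path_edges (x # xs) = insert {x, hd xs} (path_edges xs)"
  by (cases xs) (auto simp: path_edges_Cons_Cons)

lemma path_edges_append:
  "path_edges (xs @ ys) =
     path_edges xs \<union> path_edges ys \<union> (if xs = [] \<or> ys = [] then {} else {{last xs, hd ys}})"
  by (induction xs rule: induct_list012) (auto simp: path_edges_Cons_Cons path_edges_Cons)

lemma path_edges_rev [simp]: "path_edges (rev xs) = path_edges xs"
  by (induction xs rule: induct_list012)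
    (auto simp: path_edges_append path_edges_Cons_Cons hd_rev last_rev)

lemma path_edges_drop: "path_edges (drop m xs) = path_edge xs ` {m..<length xs - 1}"
proof -
  have "path_edges (drop m xs) = (\<lambda>j. path_edge xs (m + j)) ` {..<length xs - m - 1}"
    unfolding path_edges_eq_image by (auto simp: path_edge_def)
  also have "\<dots> = path_edge xs ` ((+) m ` {..<length xs - m - 1})"
    by (simp only: image_image)
  also have "(+) m ` {..<length xs - m - 1} = {m..<length xs - 1}"
    unfolding lessThan_atLeast0 image_add_atLeastLessThan by (cases "m < length xs") auto
  finally show ?thesis .
qed

lemma path_edges_take: "path_edges (take m xs) = path_edge xs ` {..<min m (length xs) - 1}"
  by (simp add: path_edges_eq_image path_edge_def min_def)

lemma path_edges_drop_take:
  "path_edges (drop s (take t xs)) = path_edge xs ` {s..<min t (length xs) - 1}"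
  unfolding path_edges_drop by (auto simp: path_edge_def intro!: image_cong)

lemma inj_on_path_edge: "distinct xs \<Longrightarrow> inj_on (path_edge xs) {..<length xs - 1}"
  by (auto simp: inj_on_def path_edge_def doubleton_eq_iff nth_eq_iff_index_eq)

lemma mod_add_eq_imp_eq:
  fixes n :: nat
  assumes "(y + a) mod n = (y + b) mod n" "a < n" "b < n"
  shows "a = b"
proof -
  have "a' = b'" if "(y + a') mod n = (y + b') mod n" "a' \<le> b'" "b' < n" for a' b' :: nat
  proof -
    have "n dvd b' - a'"
      using that mod_eq_dvd_iff_nat[of "y + a'" "y + b'" n] by simp
    then show ?thesis using that nat_dvd_not_less[of "b' - a'" n] by (cases "a' < b'") auto
  qed
  then show ?thesis using assms by (metis nat_le_linear)
qed

definition cycle_edge :: "'a list \<Rightarrow> nat \<Rightarrow> 'a set" where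
  "cycle_edge C j = {C ! j, C ! (Suc j mod length C)}"

lemma cycle_edges_eq_image:
  assumes "C \<noteq> []"
  shows "cycle_edges C = cycle_edge C ` {..<length C}"
proof -
  have "{..<length C} = insert (length C - 1) {..<length C - 1}"
    using assms by (cases C) auto
  moreover have "cycle_edge C ` {..<length C - 1} = path_edge C ` {..<length C - 1}"
    by (auto simp: cycle_edge_def path_edge_def intro!: image_cong)
  moreover have "cycle_edge C (length C - 1) = {last C, hd C}"
    using assms by (simp add: cycle_edge_def last_conv_nth hd_conv_nth)
  ultimately show ?thesis
    unfolding cycle_edges_def path_edges_eq_image by auto
qed

lemma cycle_edge_mod_in_cycle_edges:
  assumes "C \<noteq> []"
  shows "{C ! (m mod length C), C ! (Suc m mod length C)} \<in> cycle_edges C"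
proof -
  have "{C ! (m mod length C), C ! (Suc m mod length C)} = cycle_edge C (m mod length C)"
    by (simp add: cycle_edge_def mod_Suc_eq)
  then show ?thesis using assms by (simp add: cycle_edges_eq_image)
qed

lemma inj_on_cycle_edge:
  assumes "distinct C" "3 \<le> length C"
  shows "inj_on (cycle_edge C) {..<length C}"
proof (rule inj_onI)
  fix i j assume ij: "i \<in> {..<length C}" "j \<in> {..<length C}" "cycle_edge C i = cycle_edge C j"
  let ?n = "length C"
  have "Suc i mod ?n < ?n" "Suc j mod ?n < ?n" using ij by (auto intro: mod_less_divisor)
  then have "i = j \<or> (i = Suc j mod ?n \<and> j = Suc i mod ?n)"
    using ij assms by (auto simp: cycle_edge_def doubleton_eq_iff nth_eq_iff_index_eq)
  moreover have "Suc (Suc i mod ?n) mod ?n \<noteq> i"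
  proof
    assume "Suc (Suc i mod ?n) mod ?n = i"
    then have "(i + 2) mod ?n = i mod ?n" using ij by (simp add: mod_Suc_eq)
    then have "?n dvd 2" using mod_eq_dvd_iff_nat[of i "i + 2" ?n] by simp
    then show False using assms(2) by (auto dest: dvd_imp_le)
  qed
  ultimately show "i = j" by auto
qed

lemma cycle_edges_rev [simp]: "cycle_edges (rev C) = cycle_edges C"
  by (cases "C = []") (auto simp: cycle_edges_def hd_rev last_rev)

lemma cycle_edges_rotate1 [simp]: "cycle_edges (rotate1 C) = cycle_edges C"
  by (cases C rule: remdups_adj.cases) (auto simp: cycle_edges_def path_edges_append path_edges_Cons)

lemma cycle_edges_rotate [simp]: "cycle_edges (rotate m C) = cycle_edges C"
  by (induction m) simp_all

lemma nth_rev_rotate1: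
  assumes "j < length C"
  shows "rev (rotate1 C) ! j = C ! ((length C - j) mod length C)"
  using assms by (cases C; cases j) (auto simp: rev_nth nth_Cons' Suc_diff_Suc)

lemma cycle_starting_at_edge:
  assumes "C \<noteq> []" "distinct C" "{a, b} \<in> cycle_edges C" "a \<noteq> b"
  obtains C' where "distinct C'" "length C' = length C" "set C' = set C"
    "cycle_edges C' = cycle_edges C" "hd C' = a" "last C' = b"
proof -
  let ?n = "length C"
  obtain m where m: "m < ?n" "{a, b} = {C ! m, C ! (Suc m mod ?n)}"
    using assms(1,3) by (auto simp: cycle_edges_eq_image cycle_edge_def)
  define C1 where "C1 = rotate (Suc m) C"
  have C1: "distinct C1" "length C1 = ?n" "set C1 = set C" "cycle_edges C1 = cycle_edges C"
    using assms(2) by (simp_all add: C1_def)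
  have "hd C1 = C ! (Suc m mod ?n)"
    unfolding C1_def using assms(1) by (rule hd_rotate_conv_nth)
  moreover have "last C1 = C ! m"
  proof -
    have "last C1 = C ! ((Suc m + (?n - 1)) mod ?n)"
      using assms(1) by (simp add: C1_def last_conv_nth nth_rotate del: rotate_Suc)
    also have "Suc m + (?n - 1) = m + ?n" using m(1) by linarith
    also have "(m + ?n) mod ?n = m" using m(1) by simp
    finally show ?thesis .
  qed
  ultimately consider "hd C1 = a" "last C1 = b" | "hd (rev C1) = a" "last (rev C1) = b"
    using m(2) C1 assms(1) by (auto simp: doubleton_eq_iff hd_rev last_rev)
  then show ?thesis
  proof cases
    case 1
    then show ?thesis using C1 that by simp
  next
    case 2
    then show ?thesis using C1 that[of "rev C1"] by simp
  qed
qed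

lemma set_drop_eq_image: "set (drop m xs) = (!) xs ` {m..<length xs}"
proof -
  have "drop m xs = map ((!) xs) [m..<length xs]" by (simp add: list_eq_iff_nth_eq)
  then show ?thesis by simp
qed

lemma path_segment:
  assumes "distinct xs" "s \<le> t" "t < length xs"
  defines "seg \<equiv> drop s (take (Suc t) xs)"
  shows "distinct seg" "length seg = t - s + 1" "path_edges seg \<subseteq> path_edges xs"
    "hd seg = xs ! s" "last seg = xs ! t" "set seg = (!) xs ` {s..t}"
proof -
  show "distinct seg" using assms(1) by (simp add: seg_def distinct_drop distinct_take)
  show "length seg = t - s + 1" using assms by (simp add: seg_def)
  show "path_edges seg \<subseteq> path_edges xs"
    unfolding seg_def path_edges_drop_take path_edges_eq_image[of xs] using assms by auto
  show "hd seg = xs ! s" using assms by (simp add: seg_def hd_drop_conv_nth)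
  show "last seg = xs ! t" using assms by (simp add: seg_def last_conv_nth)
  have "seg = map ((!) xs) [s..<Suc t]"
    using assms by (simp add: seg_def list_eq_iff_nth_eq del: upt_Suc)
  then show "set seg = (!) xs ` {s..t}"
    by (simp add: atLeastLessThanSuc_atLeastAtMost del: upt_Suc)
qed

definition two_path_decomposable :: "'a set set \<Rightarrow> nat \<Rightarrow> bool" where
  "two_path_decomposable E n \<longleftrightarrow>
     (\<exists>p1 p2. decomposes_into_two_paths E p1 p2 \<and>
        path_length p1 \<in> {n - 1, n, n + 1} \<and> path_length p2 \<in> {n - 1, n, n + 1})"

lemma decomposes_into_two_paths_by_indices:
  assumes "is_path p1" "is_path p2" "inj_on f I" "inj_on g J" "f ` I \<inter> g ` J = {}"
    and "path_edges p1 = f ` A1 \<union> g ` B1" "path_edges p2 = f ` A2 \<union> g ` B2"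
    and "A1 \<union> A2 = I" "A1 \<inter> A2 = {}" "B1 \<union> B2 = J" "B1 \<inter> B2 = {}"
  shows "decomposes_into_two_paths (f ` I \<union> g ` J) p1 p2"
proof -
  have "f ` A1 \<inter> f ` A2 = {}" "g ` B1 \<inter> g ` B2 = {}"
    using inj_on_image_Int[OF assms(3), of A1 A2] inj_on_image_Int[OF assms(4), of B1 B2] assms(8-11)
    by auto
  moreover have "f ` A1 \<inter> g ` B2 = {}" "f ` A2 \<inter> g ` B1 = {}"
    using assms(5,8,10) by auto
  ultimately have "path_edges p1 \<inter> path_edges p2 = {}"
    unfolding assms(6,7) Int_Un_distrib Int_Un_distrib2 by (simp add: Int_commute)
  moreover have "path_edges p1 \<union> path_edges p2 = f ` I \<union> g ` J"
    unfolding assms(6,7) assms(8,10)[symmetric] by auto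
  ultimately show ?thesis
    using assms(1,2) unfolding decomposes_into_two_paths_def by blast
qed

lemma least_two_witnesses:
  fixes Q :: "nat \<Rightarrow> bool"
  assumes "Q a" "Q b" "a \<noteq> b"
  obtains t1 t2 where "t1 < t2" "Q t1" "Q t2" "\<And>u. u < t2 \<Longrightarrow> u \<noteq> t1 \<Longrightarrow> \<not> Q u"
proof -
  define t1 where "t1 = (LEAST u. Q u)"
  have "Q t1" "t1 \<le> a" "t1 \<le> b" unfolding t1_def using assms by (auto intro: LeastI Least_le)
  then have "\<exists>u. t1 < u \<and> Q u" using assms by (cases "a = t1") (auto intro: le_neq_implies_less)
  define t2 where "t2 = (LEAST u. t1 < u \<and> Q u)"
  have "t1 < t2 \<and> Q t2" unfolding t2_def using \<open>\<exists>u. t1 < u \<and> Q u\<close> by (rule LeastI_ex)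
  moreover have "\<not> Q u" if "u < t2" "u \<noteq> t1" for u
  proof (cases "u < t1")
    case True then show ?thesis unfolding t1_def by (rule not_less_Least)
  next
    case False
    then have "t1 < u" using that(2) by simp
    then show ?thesis using not_less_Least[OF that(1)[unfolded t2_def]] by blast
  qed
  ultimately show ?thesis using that \<open>Q t1\<close> by blast
qed

section \<open>A cycle and an edge-disjoint path in a graph of large girth\<close>

locale cycle_and_path =
  fixes k n :: nat and C P :: "'a list"
  assumes k_ge_3: "3 \<le> k" and n_eq: "n = 2 * k"
    and distinct_C: "distinct C" and length_C: "length C = n"
    and distinct_P: "distinct P" and length_P: "length P = n + 1"
    and edge_disjoint: "cycle_edges C \<inter> path_edges P = {}"
    and girth_ge: "enat (n - 2) \<le> girth (cycle_edges C \<union> path_edges P)"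
begin

abbreviation H :: "'a set set" where
  "H \<equiv> cycle_edges C \<union> path_edges P"

lemma n_ge_6: "6 \<le> n"
  using k_ge_3 n_eq by simp

lemma C_nonempty: "C \<noteq> []"
  using length_C n_ge_6 by auto

lemma nth_C_eqD: "a < n \<Longrightarrow> b < n \<Longrightarrow> C ! a = C ! b \<Longrightarrow> a = b"
  using distinct_C length_C by (simp add: nth_eq_iff_index_eq)

lemma nth_P_eqD: "a \<le> n \<Longrightarrow> b \<le> n \<Longrightarrow> P ! a = P ! b \<Longrightarrow> a = b"
  using distinct_P length_P by (simp add: nth_eq_iff_index_eq)

lemma cycle_edge_mod: "{C ! (m mod n), C ! (Suc m mod n)} \<in> cycle_edges C"
  using cycle_edge_mod_in_cycle_edges[OF C_nonempty] length_C by simp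

lemma cycle_and_path_other_cycle:
  assumes "distinct C'" "length C' = n" "cycle_edges C' = cycle_edges C"
  shows "cycle_and_path k n C' P"
  using assms k_ge_3 n_eq distinct_P length_P edge_disjoint girth_ge by unfold_locales auto

lemma cycle_and_path_rev: "cycle_and_path k n C (rev P)"
  using k_ge_3 n_eq distinct_C length_C distinct_P length_P edge_disjoint girth_ge
  by unfold_locales auto

lemma girth_le_length:
  assumes "is_cycle cs" "cycle_edges cs \<subseteq> H"
  shows "n - 2 \<le> length cs"
proof -
  have "girth H \<le> enat (length cs)"
    unfolding girth_def cycle_length_def using assms by (auto intro!: Inf_lower)
  with girth_ge have "enat (n - 2) \<le> enat (length cs)" by (rule order_trans)
  then show ?thesis by simp
qed

definition arc :: "nat \<Rightarrow> nat \<Rightarrow> 'a list" where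
  "arc y l = map (\<lambda>m. C ! ((y + Suc m) mod n)) [0..<l]"

lemma distinct_arc:
  assumes "l < n"
  shows "distinct (arc y l)"
  unfolding arc_def distinct_map
proof (intro conjI inj_onI)
  fix a b assume ab: "a \<in> set [0..<l]" "b \<in> set [0..<l]"
    and "C ! ((y + Suc a) mod n) = C ! ((y + Suc b) mod n)"
  then have "(y + Suc a) mod n = (y + Suc b) mod n" using n_ge_6 by (auto intro: nth_C_eqD)
  then show "a = b" using mod_add_eq_imp_eq[of y "Suc a" n "Suc b"] ab assms by simp
qed simp

lemma path_edges_arc: "path_edges (arc y l) \<subseteq> cycle_edges C"
proof
  fix e assume "e \<in> path_edges (arc y l)"
  then obtain j where "j < length (arc y l) - 1" "e = path_edge (arc y l) j"
    unfolding path_edges_eq_image by blast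
  then have "e = {C ! ((y + Suc j) mod n), C ! (Suc (y + Suc j) mod n)}"
    by (simp add: path_edge_def arc_def)
  then show "e \<in> cycle_edges C" using cycle_edge_mod by simp
qed

text \<open>Closing a path of \<open>H\<close> by an arc of \<open>C\<close> that it does not meet gives a cycle.\<close>

lemma closing_cycle_bound:
  assumes L: "distinct L" "2 \<le> length L" "path_edges L \<subseteq> H"
    and ends: "hd L = C ! ((y + l) mod n)" "last L = C ! (y mod n)"
    and l: "1 \<le> l" "l < n" "4 \<le> length L + l"
    and avoid: "\<And>m. 1 \<le> m \<Longrightarrow> m < l \<Longrightarrow> C ! ((y + m) mod n) \<notin> set L"
  shows "n - 2 \<le> length L + l - 1"
proof -
  obtain v L' where L_eq: "L = v # L'" and "L' \<noteq> []" using L(2) by (cases L) (auto simp: Suc_le_eq)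
  define cs where "cs = arc y l @ L'"
  have arc: "arc y l \<noteq> []" "hd (arc y l) = C ! (Suc y mod n)" "last (arc y l) = v"
    using l(1) ends(1) L_eq by (auto simp: arc_def hd_map last_map)
  have "set (arc y l) \<inter> set L' = {}"
  proof -
    have "C ! ((y + Suc m) mod n) \<notin> set L'" if "m < l" for m
      using that avoid[of "Suc m"] L(1) ends(1) L_eq by (cases "Suc m = l") auto
    then show ?thesis by (auto simp: arc_def)
  qed
  then have "is_cycle cs"
    using distinct_arc[OF l(2)] L(1) l L_eq by (auto simp: is_cycle_def cs_def arc_def)
  moreover have "cycle_edges cs \<subseteq> H"
  proof -
    have "path_edges cs = path_edges (arc y l) \<union> path_edges L"
      using arc L_eq \<open>L' \<noteq> []\<close> by (auto simp: cs_def path_edges_append path_edges_Cons)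
    moreover have "{last cs, hd cs} = {C ! (y mod n), C ! (Suc y mod n)}"
      using arc ends(2) L_eq \<open>L' \<noteq> []\<close> by (auto simp: cs_def)
    ultimately show ?thesis
      using path_edges_arc[of y l] L(3) cycle_edge_mod[of y] unfolding cycle_edges_def[of cs] by auto
  qed
  ultimately have "n - 2 \<le> length cs" by (rule girth_le_length)
  then show ?thesis using L_eq by (simp add: cs_def arc_def)
qed

lemma segment_arc_bound:
  assumes st: "s < t" "t \<le> n"
    and ends: "P ! s = C ! x" "x < n" "P ! t = C ! y" "y < n"
    and ab: "{a, b} = {x, y}" "(a + l) mod n = b" and l: "1 \<le> l" "l < n"
    and avoid: "\<And>m u. 1 \<le> m \<Longrightarrow> m < l \<Longrightarrow> s < u \<Longrightarrow> u < t \<Longrightarrow> C ! ((a + m) mod n) \<noteq> P ! u"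
  shows "n - 2 \<le> t - s + l"
proof -
  define seg where "seg = drop s (take (Suc t) P)"
  have seg: "distinct seg" "length seg = t - s + 1" "path_edges seg \<subseteq> path_edges P"
    "hd seg = P ! s" "last seg = P ! t" "set seg = (!) P ` {s..t}"
    unfolding seg_def using path_segment[OF distinct_P, of s t] st length_P by auto
  have a: "a < n" "a mod n = a" using ab ends by (auto simp: doubleton_eq_iff)
  have ends_C: "{P ! s, P ! t} = {C ! a, C ! b}" using ends ab(1) by (auto simp: doubleton_eq_iff)
  have avoid_seg: "C ! ((a + m) mod n) \<notin> set seg" if m: "1 \<le> m" "m < l" for m
  proof
    have "(a + m) mod n \<noteq> (a + 0) mod n" "(a + m) mod n \<noteq> (a + l) mod n"
      using m l mod_add_eq_imp_eq[of a m n 0] mod_add_eq_imp_eq[of a m n l] by auto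
    then have not_end: "C ! ((a + m) mod n) \<notin> {C ! a, C ! b}"
      using a ab(2) n_ge_6 nth_C_eqD[of "(a + m) mod n"] by auto
    assume "C ! ((a + m) mod n) \<in> set seg"
    then obtain u where "s \<le> u" "u \<le> t" "C ! ((a + m) mod n) = P ! u" using seg(6) by auto
    then show False using avoid[OF m, of u] not_end ends_C by (cases "u = s \<or> u = t") auto
  qed
  have long: "4 \<le> length seg + l"
  proof (rule ccontr)
    assume "\<not> 4 \<le> length seg + l"
    then have "t = Suc s" "l = 1" using seg(2) st l by auto
    then have "{P ! s, P ! t} \<in> path_edges P" using st length_P by (auto simp: path_edges_def)
    moreover have "{P ! s, P ! t} = {C ! (a mod n), C ! (Suc a mod n)}"
      using ends_C ab(2) \<open>l = 1\<close> a by auto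
    ultimately show False using cycle_edge_mod[of a] edge_disjoint by auto
  qed
  have "\<exists>L \<in> {seg, rev seg}. hd L = C ! b \<and> last L = C ! a"
    using ends_C seg(4,5) by (auto simp: doubleton_eq_iff hd_rev last_rev)
  then obtain L where L: "L \<in> {seg, rev seg}" "hd L = C ! b" "last L = C ! a" by blast
  have "n - 2 \<le> length L + l - 1"
  proof (rule closing_cycle_bound)
    show "distinct L" "2 \<le> length L" "path_edges L \<subseteq> H" using L(1) seg st by auto
    show "hd L = C ! ((a + l) mod n)" "last L = C ! (a mod n)" using L ab(2) a by auto
    show "4 \<le> length L + l" using L(1) long by auto
    show "C ! ((a + m) mod n) \<notin> set L" if "1 \<le> m" "m < l" for m
      using L(1) avoid_seg[OF that] by auto
  qed (use l in auto)
  then show ?thesis using L(1) seg(2) by auto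
qed

text \<open>Re-indexing \<open>C\<close> to start \<open>r\<close> steps before \<open>C ! 0\<close>: the vertices at distance at most \<open>r\<close>
  from \<open>C ! 0\<close> are then exactly those with \<open>shifted r j \<le> 2 * r\<close>, and \<open>window_dist\<close> is the
  length of the arc between two of them inside this window.\<close>

definition shifted :: "nat \<Rightarrow> nat \<Rightarrow> nat" where
  "shifted r j = (j + r) mod n"

definition window_dist :: "nat \<Rightarrow> nat \<Rightarrow> nat \<Rightarrow> nat" where
  "window_dist r x y = max (shifted r x) (shifted r y) - min (shifted r x) (shifted r y)"

lemma shifted_less: "shifted r j < n"
  using n_ge_6 by (simp add: shifted_def)

lemma shifted_inj: "x < n \<Longrightarrow> y < n \<Longrightarrow> shifted r x = shifted r y \<Longrightarrow> x = y"
  using mod_add_eq_imp_eq[of r x n y] by (simp add: shifted_def add.commute)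

lemma shifted_add:
  assumes "shifted r a + m \<le> shifted r b"
  shows "shifted r ((a + m) mod n) = shifted r a + m"
proof -
  have "shifted r ((a + m) mod n) = (shifted r a + m) mod n"
    unfolding shifted_def by (metis add.commute add.left_commute mod_add_left_eq)
  then show ?thesis using assms shifted_less[of r b] by simp
qed

lemma window_segment_bound:
  assumes st: "s < t" "t \<le> n"
    and ends: "P ! s = C ! x" "x < n" "P ! t = C ! y" "y < n" "x \<noteq> y"
    and window: "shifted r x \<le> 2 * r" "shifted r y \<le> 2 * r"
    and outside: "\<And>u j. s < u \<Longrightarrow> u < t \<Longrightarrow> j < n \<Longrightarrow> P ! u = C ! j \<Longrightarrow> 2 * r < shifted r j"
  shows "n - 2 \<le> t - s + window_dist r x y"
proof -
  have "shifted r x \<noteq> shifted r y" using ends shifted_inj by blast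
  then obtain a b where ab: "{a, b} = {x, y}" "shifted r a < shifted r b"
    by (metis insert_commute linorder_neqE_nat)
  define l where "l = shifted r b - shifted r a"
  have l_eq: "l = window_dist r x y"
    using ab by (auto simp: l_def window_dist_def doubleton_eq_iff)
  have "a < n" "b < n" using ab ends by (auto simp: doubleton_eq_iff)
  have "n - 2 \<le> t - s + l"
  proof (rule segment_arc_bound[OF st ends(1-4) ab(1)])
    have "shifted r ((a + l) mod n) = shifted r b" using shifted_add[of r a l b] ab by (simp add: l_def)
    then show "(a + l) mod n = b"
      using shifted_inj[of "(a + l) mod n" b r] \<open>b < n\<close> n_ge_6 by simp
    show "1 \<le> l" "l < n" using ab shifted_less[of r b] by (auto simp: l_def)
    fix m u assume m: "1 \<le> m" "m < l" and u: "s < u" "u < t"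
    have "shifted r ((a + m) mod n) \<le> 2 * r"
      using shifted_add[of r a m b] m ab window by (auto simp: l_def doubleton_eq_iff)
    then show "C ! ((a + m) mod n) \<noteq> P ! u"
      using outside[OF u, of "(a + m) mod n"] n_ge_6 by auto
  qed
  then show ?thesis by (simp add: l_eq)
qed

lemma chord_arcs:
  assumes "s < n" "P ! s = C ! x" "x < n" "P ! Suc s = C ! y" "y < n"
  shows "n - 3 \<le> max x y - min x y" "max x y - min x y \<le> 3"
proof -
  have "x \<noteq> y" using assms nth_P_eqD[of s "Suc s"] by auto
  have "n - 2 \<le> Suc s - s + (max x y - min x y)"
    by (rule segment_arc_bound[of s "Suc s" x y "min x y" "max x y"])
      (use assms \<open>x \<noteq> y\<close> in \<open>auto simp: min_def max_def\<close>)
  then show "n - 3 \<le> max x y - min x y" by simp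
  have "(max x y + (n - (max x y - min x y))) mod n = min x y"
    using assms by (simp add: max_def min_def)
  then have "n - 2 \<le> Suc s - s + (n - (max x y - min x y))"
    by (intro segment_arc_bound[of s "Suc s" x y "max x y" "min x y"])
      (use assms \<open>x \<noteq> y\<close> in \<open>auto simp: min_def max_def\<close>)
  moreover have "max x y < n" using assms by simp
  ultimately show "max x y - min x y \<le> 3" by linarith
qed

lemma two_path_decomposable_by_indices:
  assumes "is_path p1" "is_path p2"
    and "path_edges p1 = path_edge P ` A1 \<union> cycle_edge C ` B1"
    and "path_edges p2 = path_edge P ` A2 \<union> cycle_edge C ` B2"
    and "A1 \<union> A2 = {..<n}" "A1 \<inter> A2 = {}" "B1 \<union> B2 = {..<n}" "B1 \<inter> B2 = {}"
    and "path_length p1 \<in> {n - 1, n, n + 1}" "path_length p2 \<in> {n - 1, n, n + 1}"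
  shows "two_path_decomposable H n"
proof -
  have "H = path_edge P ` {..<n} \<union> cycle_edge C ` {..<n}"
    using length_C length_P C_nonempty by (simp add: path_edges_eq_image cycle_edges_eq_image Un_commute)
  moreover have "decomposes_into_two_paths (path_edge P ` {..<n} \<union> cycle_edge C ` {..<n}) p1 p2"
  proof (rule decomposes_into_two_paths_by_indices[OF assms(1,2) _ _ _ assms(3-8)])
    show "inj_on (path_edge P) {..<n}" using inj_on_path_edge[OF distinct_P] length_P by simp
    show "inj_on (cycle_edge C) {..<n}" using inj_on_cycle_edge[OF distinct_C] length_C n_ge_6 by simp
    show "path_edge P ` {..<n} \<inter> cycle_edge C ` {..<n} = {}"
      using edge_disjoint length_C length_P C_nonempty
      by (simp add: path_edges_eq_image cycle_edges_eq_image Int_commute)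
  qed
  ultimately have "decomposes_into_two_paths H p1 p2" by simp
  with assms(9,10) show ?thesis unfolding two_path_decomposable_def by blast
qed

lemma path_edges_take_P_take_C:
  assumes "P ! i = C ! 0" "i \<le> n" "a < n"
  shows "path_edges (take i P @ take (Suc a) C) = path_edge P ` {..<i} \<union> cycle_edge C ` {..<a}"
proof -
  have arc: "path_edges (take (Suc a) C) = cycle_edge C ` {..<a}"
    unfolding path_edges_take using assms(3) length_C
    by (auto simp: min_def cycle_edge_def path_edge_def intro!: image_cong)
  show ?thesis
  proof (cases i)
    case (Suc i')
    have "path_edges (take i P) = path_edge P ` {..<i'}"
      using Suc assms(2) length_P by (simp add: path_edges_take)
    moreover have "{last (take i P), hd (take (Suc a) C)} = path_edge P i'"
      using Suc assms(1,2) length_P C_nonempty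
      by (simp add: take_Suc_conv_app_nth hd_conv_nth path_edge_def)
    ultimately show ?thesis
      using Suc arc C_nonempty length_P assms(2) by (auto simp: path_edges_append lessThan_Suc)
  qed (use arc in simp)
qed

lemma path_edges_drop_C_drop_P:
  assumes "P ! i = C ! 0" "i \<le> n" "a < n"
  shows "path_edges (drop a C @ drop i P) = path_edge P ` {i..<n} \<union> cycle_edge C ` {a..<n}"
proof -
  have "path_edges (drop a C) = cycle_edge C ` {a..<n - 1}"
    unfolding path_edges_drop using assms(3) length_C
    by (auto simp: cycle_edge_def path_edge_def intro!: image_cong)
  moreover have "{last (drop a C), hd (drop i P)} = cycle_edge C (n - 1)"
    using assms length_C length_P n_ge_6
    by (simp add: last_conv_nth hd_drop_conv_nth cycle_edge_def)
  moreover have "{a..<n} = insert (n - 1) {a..<n - 1}" using assms(3) by auto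
  ultimately show ?thesis
    using assms length_C length_P by (auto simp: path_edges_append path_edges_drop)
qed

text \<open>Leave \<open>P\<close> at \<open>C ! 0 = P ! i\<close>, follow \<open>C\<close> up to \<open>C ! a\<close>, and let the other path run from
  \<open>C ! a\<close> round to \<open>C ! 0\<close> and on along \<open>P\<close>; the lengths are \<open>i + a\<close> and \<open>2 n - i - a\<close>.\<close>

lemma decomposable_via_arc:
  assumes meet: "P ! i = C ! 0" "i \<le> k" and before: "\<And>t. t < i \<Longrightarrow> P ! t \<notin> set C"
    and after: "\<And>u j. i < u \<Longrightarrow> u \<le> n \<Longrightarrow> j < n \<Longrightarrow> P ! u = C ! j \<Longrightarrow> j + max 2 i \<le> n"
  shows "two_path_decomposable H n"
proof -
  define a where "a = n + 1 - max 2 i"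
  have a: "1 \<le> a" "a < n" "a + max 2 i = n + 1" using n_ge_6 meet(2) n_eq by (auto simp: a_def)
  have i: "i \<le> n" using meet(2) n_eq by simp
  define p1 where "p1 = take i P @ take (Suc a) C"
  define p2 where "p2 = drop a C @ drop i P"
  have "distinct p1" using distinct_P distinct_C before
    by (auto simp: p1_def distinct_take in_set_conv_nth)
  moreover have "distinct p2"
  proof -
    have "C ! j \<noteq> P ! u" if "a \<le> j" "j < n" "i \<le> u" "u \<le> n" for j u
      using that a after[of u j] meet(1) nth_C_eqD[of j 0] by (cases "u = i") auto
    then have "set (drop a C) \<inter> set (drop i P) = {}"
      using length_C length_P by (auto simp: set_drop_eq_image)
    then show ?thesis using distinct_P distinct_C by (simp add: p2_def)
  qed
  moreover have "p1 \<noteq> []" "p2 \<noteq> []" using a length_C i length_P by (auto simp: p1_def p2_def)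
  ultimately have "is_path p1" "is_path p2" by (simp_all add: is_path_def)
  then show ?thesis
  proof (rule two_path_decomposable_by_indices)
    show "path_edges p1 = path_edge P ` {..<i} \<union> cycle_edge C ` {..<a}"
      unfolding p1_def using meet(1) i a(2) by (rule path_edges_take_P_take_C)
    show "path_edges p2 = path_edge P ` {i..<n} \<union> cycle_edge C ` {a..<n}"
      unfolding p2_def using meet(1) i a(2) by (rule path_edges_drop_C_drop_P)
    have "path_length p1 = i + a" "path_length p2 = 2 * n - i - a"
      using a i length_C length_P by (simp_all add: p1_def p2_def path_length_def)
    moreover have "i + a \<in> {n - 1, n, n + 1}"
      using a(3) unfolding max_def by (cases "2 \<le> i") auto
    moreover have "2 * n - i - a \<in> {n - 1, n, n + 1}"
      using a(3) unfolding max_def by (cases "2 \<le> i") auto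
    ultimately show "path_length p1 \<in> {n - 1, n, n + 1}" "path_length p2 \<in> {n - 1, n, n + 1}"
      by simp_all
  qed (use i a in auto)
qed

lemma path_edges_around_C:
  assumes "hd C = P ! l" "last C = P ! j" "l \<le> 1" "l < j" "j \<le> n"
  shows "path_edges (take l P @ C @ [P ! (j - 1)]) =
    path_edge P ` ({..<l} \<union> {j - 1}) \<union> cycle_edge C ` {..<n - 1}"
proof -
  have around: "path_edges (C @ [P ! (j - 1)]) = cycle_edge C ` {..<n - 1} \<union> {path_edge P (j - 1)}"
  proof -
    have "path_edges C = cycle_edge C ` {..<n - 1}"
      unfolding path_edges_eq_image
      by (auto simp: cycle_edge_def path_edge_def length_C intro!: image_cong)
    moreover have "{last C, P ! (j - 1)} = path_edge P (j - 1)"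
      using assms(2,4) by (simp add: path_edge_def insert_commute)
    ultimately show ?thesis using C_nonempty by (simp add: path_edges_append)
  qed
  consider "l = 0" | "l = 1" using assms(3) by linarith
  then show ?thesis
  proof cases
    case 2
    then have "take l P = [P ! 0]" using length_P by (cases P) auto
    moreover have "{P ! 0, hd C} = path_edge P 0" using 2 assms(1) by (simp add: path_edge_def)
    ultimately show ?thesis using 2 C_nonempty around
      by (simp add: path_edges_Cons lessThan_Suc insert_commute)
  qed (use around in simp)
qed

lemma path_edges_rev_drop_P_drop_take_P:
  assumes "hd C = P ! l" "last C = P ! j" "l < j" "j \<le> n"
  shows "path_edges (rev (drop j P) @ drop l (take j P)) =
    path_edge P ` ({l..<j - 1} \<union> {j..<n}) \<union> cycle_edge C ` {n - 1}"
proof -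
  have "{last (rev (drop j P)), hd (drop l (take j P))} = cycle_edge C (n - 1)"
    using assms length_P length_C n_ge_6 C_nonempty
    by (auto simp: last_rev hd_drop_conv_nth cycle_edge_def last_conv_nth hd_conv_nth)
  moreover have "rev (drop j P) \<noteq> []" "drop l (take j P) \<noteq> []" using assms length_P by auto
  moreover have "path_edges (rev (drop j P)) = path_edge P ` {j..<n}"
    using length_P by (simp add: path_edges_drop)
  moreover have "path_edges (drop l (take j P)) = path_edge P ` {l..<j - 1}"
    using path_edges_drop_take[of l j P] assms length_P by (simp add: min_def)
  ultimately show ?thesis by (auto simp: path_edges_append)
qed

text \<open>One path follows \<open>P\<close> to \<open>P ! l = hd C\<close>, goes once round \<open>C\<close> to \<open>P ! j = last C\<close> and steps
  back to \<open>P ! (j - 1)\<close>; the other runs backwards along \<open>P\<close> to \<open>P ! j\<close>, crosses the closing edge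
  of \<open>C\<close> to \<open>P ! l\<close> and follows \<open>P\<close> up to \<open>P ! (j - 1)\<close>.\<close>

lemma decomposable_via_cycle_ends:
  assumes ends: "hd C = P ! l" "last C = P ! j" and lj: "l \<le> 1" "l < j" "j \<le> n"
    and before: "\<And>t. t < l \<Longrightarrow> P ! t \<notin> set C" and outside: "P ! (j - 1) \<notin> set C"
  shows "two_path_decomposable H n"
proof -
  define p1 where "p1 = take l P @ C @ [P ! (j - 1)]"
  define p2 where "p2 = rev (drop j P) @ drop l (take j P)"
  have "distinct p1"
  proof -
    have "P ! (j - 1) \<notin> set (take l P)"
      using lj length_P distinct_P by (auto simp: in_set_conv_nth nth_eq_iff_index_eq)
    moreover have "set (take l P) \<inter> set C = {}"
      using before lj length_P by (auto simp: in_set_conv_nth)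
    ultimately show ?thesis using distinct_P distinct_C outside by (auto simp: p1_def distinct_take)
  qed
  moreover have "distinct p2"
  proof -
    have "drop l P = drop l (take j P @ drop j P)" by simp
    also have "\<dots> = drop l (take j P) @ drop j P"
      using lj length_P by (simp add: drop_append del: append_take_drop_id)
    finally show ?thesis using distinct_P distinct_drop[of P l] by (auto simp: p2_def)
  qed
  moreover have "p1 \<noteq> []" "p2 \<noteq> []" using lj length_P by (auto simp: p1_def p2_def)
  ultimately have "is_path p1" "is_path p2" by (simp_all add: is_path_def)
  then show ?thesis
  proof (rule two_path_decomposable_by_indices)
    show "path_edges p1 = path_edge P ` ({..<l} \<union> {j - 1}) \<union> cycle_edge C ` {..<n - 1}"
      unfolding p1_def using ends lj by (rule path_edges_around_C)
    show "path_edges p2 = path_edge P ` ({l..<j - 1} \<union> {j..<n}) \<union> cycle_edge C ` {n - 1}"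
      unfolding p2_def using ends lj(2,3) by (rule path_edges_rev_drop_P_drop_take_P)
    show "path_length p1 \<in> {n - 1, n, n + 1}" "path_length p2 \<in> {n - 1, n, n + 1}"
      using lj length_P length_C by (auto simp: p1_def p2_def path_length_def)
  qed (use lj n_ge_6 in auto)
qed

lemma decomposable_via_cycle_edge:
  assumes edge: "{P ! l, P ! j} \<in> cycle_edges C" and lj: "l \<le> 1" "l < j" "j \<le> n"
    and before: "\<And>t. t < l \<Longrightarrow> P ! t \<notin> set C" and outside: "P ! (j - 1) \<notin> set C"
  shows "two_path_decomposable H n"
proof -
  have "P ! l \<noteq> P ! j" using lj nth_P_eqD[of l j] by auto
  then obtain C' where C': "distinct C'" "length C' = n" "set C' = set C"
    "cycle_edges C' = cycle_edges C" "hd C' = P ! l" "last C' = P ! j"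
    using cycle_starting_at_edge[OF C_nonempty distinct_C edge] length_C by metis
  interpret C': cycle_and_path k n C' P
    using C'(1,2,4) by (rule cycle_and_path_other_cycle)
  have "two_path_decomposable (cycle_edges C' \<union> path_edges P) n"
    by (rule C'.decomposable_via_cycle_ends) (use C' lj before outside in auto)
  then show ?thesis using C'(4) by simp
qed

end

section \<open>Returns of the path to a window around its first meeting point\<close>

text \<open>\<open>t1 < t2\<close> are the first two returns of \<open>P\<close>, after \<open>P ! i = C ! 0\<close>, to the vertices of \<open>C\<close>
  at distance at most \<open>r\<close> from \<open>C ! 0\<close>.\<close>

locale window_returns = cycle_and_path +
  fixes i r t1 t2 w1 w2 :: nat
  assumes meet: "P ! i = C ! 0" and i_le_k: "i \<le> k"
    and before: "\<And>t. t < i \<Longrightarrow> P ! t \<notin> set C"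
    and r_eq: "r = max 2 i - 1"
    and t1_t2: "i < t1" "t1 < t2" "t2 \<le> n"
    and w1: "w1 < n" "P ! t1 = C ! w1" "shifted r w1 \<le> 2 * r"
    and w2: "w2 < n" "P ! t2 = C ! w2" "shifted r w2 \<le> 2 * r"
    and first_returns:
      "\<And>u j. i < u \<Longrightarrow> u < t2 \<Longrightarrow> u \<noteq> t1 \<Longrightarrow> j < n \<Longrightarrow> P ! u = C ! j \<Longrightarrow> 2 * r < shifted r j"
begin

lemma shifted_0: "shifted r 0 = r"
  unfolding shifted_def using r_eq i_le_k n_eq k_ge_3 by (auto simp: max_def)

lemma not_meet_again: "i < u \<Longrightarrow> u \<le> n \<Longrightarrow> P ! u \<noteq> C ! 0"
  using meet nth_P_eqD[of u i] i_le_k n_eq by auto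

lemma w_nonzero: "w1 \<noteq> 0" "w2 \<noteq> 0"
proof -
  show "w1 \<noteq> 0" using not_meet_again[of t1] t1_t2 w1 by (cases "w1 = 0") auto
  show "w2 \<noteq> 0" using not_meet_again[of t2] t1_t2 w2 by (cases "w2 = 0") auto
qed

lemma w1_ne_w2: "w1 \<noteq> w2"
  using t1_t2 w1 w2 nth_P_eqD[of t1 t2] by auto

lemma first_return_bound: "n + i \<le> t1 + window_dist r 0 w1 + 2"
proof -
  have "n - 2 \<le> t1 - i + window_dist r 0 w1"
  proof (rule window_segment_bound)
    show "0 \<noteq> w1" using w_nonzero by simp
    show "2 * r < shifted r j" if "i < u" "u < t1" "j < n" "P ! u = C ! j" for u j
      using first_returns[OF that(1) _ _ that(3,4)] that(2) t1_t2 by simp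
  qed (use meet t1_t2 w1 shifted_0 n_ge_6 in auto)
  then show ?thesis using t1_t2 n_ge_6 by linarith
qed

lemma second_return_bound: "n + t1 \<le> t2 + window_dist r w1 w2 + 2"
proof -
  have "n - 2 \<le> t2 - t1 + window_dist r w1 w2"
  proof (rule window_segment_bound)
    show "2 * r < shifted r j" if "t1 < u" "u < t2" "j < n" "P ! u = C ! j" for u j
      using first_returns[OF _ that(2) _ that(3,4)] that(1) t1_t2 by simp
  qed (use t1_t2 w1 w2 w1_ne_w2 in auto)
  then show ?thesis using t1_t2 n_ge_6 by linarith
qed

lemma window_dist_bounds: "window_dist r 0 w1 \<le> r" "window_dist r w1 w2 \<le> 2 * r"
  using shifted_0 w1(3) w2(3) by (auto simp: window_dist_def)

lemma returns_bound: "n + i \<le> 3 * r + 4"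
  using first_return_bound second_return_bound window_dist_bounds t1_t2 by linarith

lemma n_eq_6: "n = 6" and i_cases: "i \<le> 1 \<or> i = 3"
proof -
  have "n = 6 \<and> (i \<le> 1 \<or> i = 3)"
  proof (cases "i \<le> 1")
    case True
    then show ?thesis using returns_bound r_eq n_ge_6 n_eq by simp
  next
    case False
    then have "i = k" "r = k - 1" using returns_bound r_eq i_le_k n_eq by auto
    then have "t1 = n - 1" "t2 = n"
      using first_return_bound second_return_bound window_dist_bounds t1_t2 n_eq by linarith+
    then have "n - 3 \<le> max w1 w2 - min w1 w2" "max w1 w2 - min w1 w2 \<le> 3"
      using chord_arcs[of "n - 1" w1 w2] w1 w2 n_ge_6 by auto
    then show ?thesis using \<open>i = k\<close> n_eq k_ge_3 by auto
  qed
  then show "n = 6" "i \<le> 1 \<or> i = 3" by auto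
qed

lemma returns_if_i_le_1:
  assumes "i \<le> 1"
  shows "(w1 = 1 \<and> w2 = 5) \<or> (w1 = 5 \<and> w2 = 1)" "i + 3 \<le> t1" "t1 + 2 \<le> t2"
proof -
  have r: "r = 1" using assms r_eq by simp
  have n: "n = 6" by (rule n_eq_6)
  have window: "w = 1 \<or> w = 5" if "w < n" "w \<noteq> 0" "shifted r w \<le> 2 * r" for w
  proof -
    have "w \<in> {0, 1, 2, 3, 4, 5}" using that(1) n by auto
    then show ?thesis using that(2,3) unfolding shifted_def by (auto simp: r n)
  qed
  show w: "(w1 = 1 \<and> w2 = 5) \<or> (w1 = 5 \<and> w2 = 1)"
    using window[OF w1(1) w_nonzero(1) w1(3)] window[OF w2(1) w_nonzero(2) w2(3)] w1_ne_w2 by auto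
  then have "window_dist r 0 w1 = 1" "window_dist r w1 w2 = 2"
    unfolding window_dist_def shifted_def by (auto simp: r n)
  then show "i + 3 \<le> t1" "t1 + 2 \<le> t2"
    using first_return_bound second_return_bound n by linarith+
qed

text \<open>A vertex \<open>P ! (t2 - 1)\<close> on \<open>C\<close> would lie outside the window and, by the chord to \<open>P ! t2\<close>,
  opposite \<open>C ! w2\<close>; so it would be next to \<open>C ! w1\<close>, and the segment of \<open>P\<close> from \<open>t1\<close> would
  close too short a cycle.\<close>

lemma before_second_return_off_cycle:
  assumes "i \<le> 1"
  shows "P ! (t2 - 1) \<notin> set C"
proof
  note w = returns_if_i_le_1(1)[OF assms] and t = returns_if_i_le_1(2,3)[OF assms]
  have r: "r = 1" using assms r_eq by simp
  have n: "n = 6" by (rule n_eq_6)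
  assume "P ! (t2 - 1) \<in> set C"
  then obtain x where x: "x < n" "P ! (t2 - 1) = C ! x" using length_C by (auto simp: in_set_conv_nth)
  have "2 * r < shifted r x" using first_returns[of "t2 - 1" x] x t t1_t2 by auto
  moreover have "n - 3 \<le> max x w2 - min x w2" "max x w2 - min x w2 \<le> 3"
    using chord_arcs[of "t2 - 1" x w2] x w2 t t1_t2 by auto
  moreover have "x \<in> {0, 1, 2, 3, 4, 5}" using x(1) n by auto
  ultimately have "x \<in> {2, 3, 4}" "max x w2 - min x w2 = 3" unfolding shifted_def by (auto simp: r n)
  then have "(w1 = 1 \<and> x = 2) \<or> (w1 = 5 \<and> x = 4)" using w by auto
  then have "n - 2 \<le> (t2 - 1 - t1) + 1"
  proof
    assume "w1 = 1 \<and> x = 2"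
    then show ?thesis
      by (intro segment_arc_bound[of t1 "t2 - 1" w1 x 1 2 1]) (use t t1_t2 w1 x n in auto)
  next
    assume "w1 = 5 \<and> x = 4"
    then show ?thesis
      by (intro segment_arc_bound[of t1 "t2 - 1" w1 x 4 5 1]) (use t t1_t2 w1 x n in auto)
  qed
  then show False using t t1_t2 n by linarith
qed

lemma decomposable_if_i_le_1:
  assumes "i \<le> 1"
  shows "two_path_decomposable H n"
proof -
  have "{P ! i, P ! t2} \<in> cycle_edges C"
    using cycle_edge_mod[of 0] cycle_edge_mod[of 5] meet w2 returns_if_i_le_1(1)[OF assms] n_eq_6
    by (auto simp: insert_commute)
  then show ?thesis
    using decomposable_via_cycle_edge[of i t2] before_second_return_off_cycle[OF assms] assms t1_t2 before
    by simp
qed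

lemma decomposable_if_i_eq_3:
  assumes "i = 3"
  shows "two_path_decomposable H n"
proof -
  interpret R: cycle_and_path k n C "rev P" by (rule cycle_and_path_rev)
  have r: "r = 2" using assms r_eq by simp
  have n: "n = 6" by (rule n_eq_6)
  have t: "t1 = 5" "t2 = 6" "window_dist r 0 w1 = 2"
    using first_return_bound window_dist_bounds t1_t2 assms r n by linarith+
  have "w1 \<in> {0, 1, 2, 3, 4, 5}" using w1(1) n by auto
  then have "w1 = 2 \<or> w1 = 4" using t(3) unfolding window_dist_def shifted_def by (auto simp: r n)
  moreover have "max w1 w2 - min w1 w2 = 3" using chord_arcs[of 5 w1 w2] w1 w2 t n by auto
  ultimately have w: "(w1 = 2 \<and> w2 = 5) \<or> (w1 = 4 \<and> w2 = 1)" using w2(1) n by auto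
  have "P ! 4 \<notin> set C"
  proof
    assume "P ! 4 \<in> set C"
    then obtain x where x: "x < n" "P ! 4 = C ! x" using length_C by (auto simp: in_set_conv_nth)
    have "2 * r < shifted r x" using first_returns[of 4 x] x t assms by auto
    moreover have "x \<in> {0, 1, 2, 3, 4, 5}" using x(1) n by auto
    ultimately have "x = 3" unfolding shifted_def by (auto simp: r n)
    moreover have "max x w1 - min x w1 = 3" using chord_arcs[of 4 x w1] x w1 t n by auto
    ultimately show False using w by auto
  qed
  moreover have "{P ! 6, P ! 3} \<in> cycle_edges C"
    using cycle_edge_mod[of 0] cycle_edge_mod[of 5] meet assms w t w2 n by (auto simp: insert_commute)
  moreover have "rev P ! 0 = P ! 6" "rev P ! 3 = P ! 3" "rev P ! 2 = P ! 4"
    using length_P n by (simp_all add: rev_nth)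
  ultimately have "two_path_decomposable (cycle_edges C \<union> path_edges (rev P)) n"
    by (intro R.decomposable_via_cycle_edge[of 0 3]) (use n in auto)
  then show ?thesis by simp
qed

end

context cycle_and_path
begin

lemma decomposable_if_returns_on_both_sides:
  assumes meet: "P ! i = C ! 0" "i \<le> k" and before: "\<And>t. t < i \<Longrightarrow> P ! t \<notin> set C"
    and r: "r = max 2 i - 1"
    and A: "i < uA" "uA \<le> n" "jA < n" "P ! uA = C ! jA" "n - r \<le> jA"
    and B: "i < uB" "uB \<le> n" "jB < n" "P ! uB = C ! jB" "jB \<le> r"
  shows "two_path_decomposable H n"
proof -
  define Q where "Q u \<longleftrightarrow> i < u \<and> u \<le> n \<and> (\<exists>j<n. P ! u = C ! j \<and> shifted r j \<le> 2 * r)" for u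
  have r_less: "r < n - r" using r meet(2) n_eq k_ge_3 by auto
  have "shifted r jA \<le> 2 * r"
    using A(3,5) r_less by (simp add: shifted_def le_mod_geq)
  then have "Q uA" using A unfolding Q_def by blast
  have "Q uB" using B r_less unfolding Q_def shifted_def by auto
  have "uA \<noteq> uB" using A B r_less nth_C_eqD[of jA jB] by auto
  obtain t1 t2 where t: "t1 < t2" "Q t1" "Q t2" "\<And>u. u < t2 \<Longrightarrow> u \<noteq> t1 \<Longrightarrow> \<not> Q u"
    using least_two_witnesses[OF \<open>Q uA\<close> \<open>Q uB\<close> \<open>uA \<noteq> uB\<close>] by blast
  obtain w1 w2 where w: "w1 < n" "P ! t1 = C ! w1" "shifted r w1 \<le> 2 * r"
    "w2 < n" "P ! t2 = C ! w2" "shifted r w2 \<le> 2 * r"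
    using t(2,3) unfolding Q_def by blast
  have "window_returns k n C P i r t1 t2 w1 w2"
  proof (intro window_returns.intro window_returns_axioms.intro)
    show "cycle_and_path k n C P" by (rule cycle_and_path_axioms)
    show "i < t1" "t2 \<le> n" using t(2,3) unfolding Q_def by simp_all
    show "2 * r < shifted r j" if "i < u" "u < t2" "u \<noteq> t1" "j < n" "P ! u = C ! j" for u j
      using t(4)[OF that(2,3)] that \<open>t2 \<le> n\<close> unfolding Q_def by auto
  qed (use meet before r t(1) w in simp_all)
  then interpret window_returns k n C P i r t1 t2 w1 w2 .
  show ?thesis using i_cases decomposable_if_i_le_1 decomposable_if_i_eq_3 by blast
qed

lemma decomposable_via_reflected_arc:
  assumes meet: "P ! i = C ! 0" "i \<le> k" and before: "\<And>t. t < i \<Longrightarrow> P ! t \<notin> set C"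
    and after: "\<And>u j. i < u \<Longrightarrow> u \<le> n \<Longrightarrow> j < n \<Longrightarrow> P ! u = C ! j \<Longrightarrow> max 2 i \<le> j"
  shows "two_path_decomposable H n"
proof -
  define C' where "C' = rev (rotate1 C)"
  have C': "distinct C'" "length C' = n" "set C' = set C" "cycle_edges C' = cycle_edges C"
    using distinct_C length_C by (simp_all add: C'_def)
  have nth_C': "C' ! j = C ! ((n - j) mod n)" if "j < n" for j
    using that length_C by (simp add: C'_def nth_rev_rotate1)
  interpret C': cycle_and_path k n C' P
    using C'(1,2,4) by (rule cycle_and_path_other_cycle)
  have "two_path_decomposable (cycle_edges C' \<union> path_edges P) n"
  proof (rule C'.decomposable_via_arc)
    show "P ! i = C' ! 0" using meet(1) nth_C'[of 0] n_ge_6 by simp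
    fix u j assume u: "i < u" "u \<le> n" "j < n" "P ! u = C' ! j"
    show "j + max 2 i \<le> n"
    proof (cases "j = 0")
      case True
      then show ?thesis using u nth_C'[of 0] meet nth_P_eqD[of u i] n_eq by auto
    next
      case False
      then have "P ! u = C ! (n - j)" using u nth_C' by simp
      then show ?thesis using after[of u "n - j"] u False by (auto simp: max_def)
    qed
  qed (use meet(2) before C'(3) in auto)
  then show ?thesis using C'(4) by simp
qed

lemma decomposable_from_meeting:
  assumes meet: "P ! i = C ! 0" "i \<le> k" and before: "\<And>t. t < i \<Longrightarrow> P ! t \<notin> set C"
  shows "two_path_decomposable H n"
proof (cases "\<forall>u j. i < u \<longrightarrow> u \<le> n \<longrightarrow> j < n \<longrightarrow> P ! u = C ! j \<longrightarrow> j + max 2 i \<le> n")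
  case True
  then show ?thesis using decomposable_via_arc[OF meet before] by blast
next
  case False
  then obtain uA jA where A: "i < uA" "uA \<le> n" "jA < n" "P ! uA = C ! jA" "n - (max 2 i - 1) \<le> jA"
    by auto
  show ?thesis
  proof (cases "\<forall>u j. i < u \<longrightarrow> u \<le> n \<longrightarrow> j < n \<longrightarrow> P ! u = C ! j \<longrightarrow> max 2 i \<le> j")
    case True
    then show ?thesis using decomposable_via_reflected_arc[OF meet before] by blast
  next
    case False
    then obtain uB jB where B: "i < uB" "uB \<le> n" "jB < n" "P ! uB = C ! jB" "\<not> max 2 i \<le> jB"
      by blast
    then have "jB \<le> max 2 i - 1" by linarith
    with B show ?thesis by (intro decomposable_if_returns_on_both_sides[OF meet before refl A]) simp_all
  qed
qed

lemma decomposable_from_first_meeting: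
  assumes "i \<le> k" "P ! i \<in> set C" "\<And>t. t < i \<Longrightarrow> P ! t \<notin> set C"
  shows "two_path_decomposable H n"
proof -
  obtain m where m: "m < n" "C ! m = P ! i" using assms(2) length_C by (auto simp: in_set_conv_nth)
  define C' where "C' = rotate m C"
  have C': "distinct C'" "length C' = n" "cycle_edges C' = cycle_edges C" "set C' = set C"
    using distinct_C length_C by (simp_all add: C'_def)
  have "C' ! 0 = P ! i" using m n_ge_6 length_C by (simp add: C'_def nth_rotate)
  interpret C': cycle_and_path k n C' P
    using C'(1-3) by (rule cycle_and_path_other_cycle)
  have "two_path_decomposable (cycle_edges C' \<union> path_edges P) n"
    by (rule C'.decomposable_from_meeting) (use \<open>C' ! 0 = P ! i\<close> assms C'(4) in auto)
  then show ?thesis using C'(3) by simp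
qed

lemma decomposable:
  assumes "set C \<inter> set P \<noteq> {}"
  shows "two_path_decomposable H n"
proof -
  obtain t0 where "t0 < length P" "P ! t0 \<in> set C"
    using assms by (metis disjoint_iff in_set_conv_nth)
  then have "t0 \<le> n" using length_P by simp
  define h where "h = (LEAST t. P ! t \<in> set C)"
  have h: "P ! h \<in> set C" "\<And>t. t < h \<Longrightarrow> P ! t \<notin> set C" "h \<le> n"
    unfolding h_def using \<open>P ! t0 \<in> set C\<close> \<open>t0 \<le> n\<close>
    by (auto intro: LeastI Least_le[THEN order_trans] dest: not_less_Least)
  show ?thesis
  proof (cases "h \<le> k")
    case True
    then show ?thesis using decomposable_from_first_meeting h by blast
  next
    case False
    interpret R: cycle_and_path k n C "rev P" by (rule cycle_and_path_rev)
    have "rev P ! (n - h) \<in> set C" using h(1,3) length_P by (simp add: rev_nth Suc_diff_le)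
    define h' where "h' = (LEAST t. rev P ! t \<in> set C)"
    have h': "rev P ! h' \<in> set C" "\<And>t. t < h' \<Longrightarrow> rev P ! t \<notin> set C" "h' \<le> n - h"
      unfolding h'_def using \<open>rev P ! (n - h) \<in> set C\<close>
      by (auto intro: LeastI Least_le dest: not_less_Least)
    have "two_path_decomposable (cycle_edges C \<union> path_edges (rev P)) n"
      using h' False n_eq by (intro R.decomposable_from_first_meeting) auto
    then show ?thesis by simp
  qed
qed

end

theorem mainTheorem8:
  fixes k :: nat and C P :: "'a list"
  assumes "k \<ge> 3"
    and "is_cycle C" and "cycle_length C = 2 * k"
    and "is_path P" and "path_length P = 2 * k"
    and "cycle_edges C \<inter> path_edges P = {}"
    and "set C \<inter> set P \<noteq> {}"
    and "girth (cycle_edges C \<union> path_edges P) \<ge> enat (2 * k - 2)"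
  shows "\<exists>p1 p2. decomposes_into_two_paths (cycle_edges C \<union> path_edges P) p1 p2 \<and>
           path_length p1 \<in> {2 * k - 1, 2 * k, 2 * k + 1} \<and>
           path_length p2 \<in> {2 * k - 1, 2 * k, 2 * k + 1}"
proof -
  have "length P = 2 * k + 1"
    using assms(4,5) by (cases P) (simp_all add: is_path_def path_length_def)
  then interpret cycle_and_path k "2 * k" C P
    using assms by unfold_locales (simp_all add: is_cycle_def cycle_length_def is_path_def)
  show ?thesis using decomposable[OF assms(7)] unfolding two_path_decomposable_def .
qed

end
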